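(* Let $(\mathcal{C},\mathcal{B},Q,S)$ be an STV election, counted by the procedure described in the context. Let $W\subseteq\mathcal{C}$, let $b,c$ be distinct candidates not in $W$, let $\overline{\tau}=(\overline{\tau}_w)_{w\in W}$ be real numbers, and let $G\subseteq\mathcal{C}$ be such that $L_{\mathrm{basic}}(g)>U_{\mathrm{comp}}(c,g)$ (the assertion $\mathsf{AG}(g,c)$) holds for all $g\in G$. Assume that only candidates in $W\cup\{b,c\}$ can be seated, that all candidates in $W$ are seated (this may happen before, during or after the point considered), that for each $w\in W$ the transfer value of any ballot that was in $w$'s pile at the time $w$ was seated is at most $\overline{\tau}_w$, and that $b$ is eligible. Then $U_{\mathrm{complex}}(c,b,W,\overline{\tau},G)$ is an upper bound on the tally of $c$.
   Context: An STV election is a tuple $(\mathcal{C},\mathcal{B},Q,S)$ where $\mathcal{C}$ is a finite set of candidates, $\mathcal{B}$ is a multiset of ballots (each ballot is a finite sequence of distinct candidates, in order of preference, most preferred first, not necessarily containing all candidates), $S$ is the number of seats, and $Q=\lfloor |\mathcal{B}|/(S+1)\rfloor+1$ is the quota. For a sequence $\pi$, $\mathrm{first}(\pi)$ is its first element, and for a set $X$ of candidates, $\sigma_X(\pi)$ is the subsequence of $\pi$ consisting of the elements of $X$, in their original order. Counting: every ballot starts with value $1$ and is placed in the pile of its first-ranked candidate; a candidate's tally is the total value of the ballots in its pile. A candidate is eligible if neither eliminated nor seated. In each round every eligible candidate with tally at least $Q$ is seated (gets a quota), and every ballot in its pile is given a new value, the transfer value (e.g. unweighted Gregory: $(V_c-Q)/|\mathcal{B}_c|$,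 with $V_c$ the total value and $|\mathcal{B}_c|$ the number of ballots in its pile), and moved to the next-ranked eligible candidate on the ballot (or exhausted). If no candidate reaches a quota, the eligible candidate with smallest tally is eliminated and its ballots move at their current value to their next-ranked eligible candidate (or are exhausted). Counting stops when all $S$ seats are filled or the number of eligible candidates equals the number of unfilled seats, in which case all remaining eligible candidates are seated. The transfer-value rule is assumed to satisfy: an upper bound on a ballot's value is the maximum of the upper bounds on the per-candidate transfer values it was subjected to. Definitions (counts with multiplicity): $L_{\mathrm{basic}}(c)=|\{\beta\in\mathcal{B}:\mathrm{first}(\beta)=c\}|$; $U_{\mathrm{comp}}(c,c')=|\{\beta\in\mathcal{B}:\mathrm{first}(\sigma_{\{c,c'\}}(\beta))=c\}|$. Further, $U_{\mathrm{complex}}(c,b,W,\overline{\tau},G)=\sum_{\beta\in\mathcal{B}}u(\beta)$ (sum over the multiset), where $u(\beta)$ is given by the first applicable case: $u(\beta)=0$ if there is $g\in G\setminus W$ with $\mathrm{first}(\sigma_{\{g,c\}}(\beta))=g$; $u(\beta)=0$ if $c$ does not occur in $\beta$; $u(\beta)=0$ if $\mathrm{first}(\sigma_{\{b,c\}}(\beta))=b$; $u(\beta)=\max\{\overline{\tau}_w: w\in W,\ w \text{ precedes } c \text{ in } \beta\}$ if $\mathrm{first}(\beta)\in W$; and $u(\beta)=1$ otherwise. *)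

theory Defs
  imports Complex_Main "HOL-Library.Multiset"
begin

(* Ballots: the multiset of ballots is a list bs (index i = ballot i, so multiplicity
   is respected).  A counting state records seated / eliminated candidates, the pile
   each ballot is in (None = exhausted) and each ballot's current value. *)

record 'c state =
  seated :: "'c set"
  elim   :: "'c set"
  loc    :: "nat \<Rightarrow> 'c option"
  val    :: "nat \<Rightarrow> real"

definition first_opt :: "'c list \<Rightarrow> 'c option" where
  "first_opt xs = (case xs of [] \<Rightarrow> None | x # _ \<Rightarrow> Some x)"

definition sigma :: "'c set \<Rightarrow> 'c list \<Rightarrow> 'c list" where
  "sigma X xs = filter (\<lambda>x. x \<in> X) xs"

definition stv_election :: "'c set \<Rightarrow> 'c list list \<Rightarrow> bool" where
  "stv_election C bs \<longleftrightarrow> finite C \<and> (\<forall>\<beta>\<in>set bs. distinct \<beta> \<and> set \<beta> \<subseteq> C)"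

definition quota :: "'c list list \<Rightarrow> nat \<Rightarrow> real" where
  "quota bs S = real (length bs div (S + 1) + 1)"

definition eligible :: "'c set \<Rightarrow> 'c state \<Rightarrow> 'c set" where
  "eligible C s = C - seated s - elim s"

definition pile :: "'c list list \<Rightarrow> 'c state \<Rightarrow> 'c \<Rightarrow> nat set" where
  "pile bs s c = {i. i < length bs \<and> loc s i = Some c}"

definition tally :: "'c list list \<Rightarrow> 'c state \<Rightarrow> 'c \<Rightarrow> real" where
  "tally bs s c = (\<Sum>i\<in>pile bs s c. val s i)"

definition pile_values :: "'c list list \<Rightarrow> 'c state \<Rightarrow> 'c \<Rightarrow> real multiset" where
  "pile_values bs s c = image_mset (val s) (mset_set (pile bs s c))"

definition next_elig :: "'c set \<Rightarrow> 'c list \<Rightarrow> 'c \<Rightarrow> 'c option" where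
  "next_elig E \<beta> x = find (\<lambda>y. y \<in> E) (tl (dropWhile (\<lambda>y. y \<noteq> x) \<beta>))"

(* A transfer-value rule: tv Q vs v is the new value of a ballot of current value v
   in the pile (with multiset of values vs) of a candidate seated with quota Q.
   E.g. unweighted Gregory: tv Q vs v = (sum_mset vs - Q) / size vs.
   Standing requirement: transfer values are fractions in [0,1]. *)
definition valid_tv :: "(real \<Rightarrow> real multiset \<Rightarrow> real \<Rightarrow> real) \<Rightarrow> bool" where
  "valid_tv tv \<longleftrightarrow> (\<forall>Q vs v. 0 < Q \<longrightarrow> (\<forall>u\<in>#vs. 0 \<le> u \<and> u \<le> 1) \<longrightarrow> v \<in># vs
      \<longrightarrow> Q \<le> sum_mset vs \<longrightarrow> 0 \<le> tv Q vs v \<and> tv Q vs v \<le> 1)"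

definition initial_state :: "'c list list \<Rightarrow> 'c state" where
  "initial_state bs = \<lparr>seated = {}, elim = {}, loc = (\<lambda>i. first_opt (bs ! i)), val = (\<lambda>i. 1)\<rparr>"

definition running :: "'c set \<Rightarrow> nat \<Rightarrow> 'c state \<Rightarrow> bool" where
  "running C S s \<longleftrightarrow> card (seated s) < S \<and> S - card (seated s) < card (eligible C s)"

definition quota_step ::
  "(real \<Rightarrow> real multiset \<Rightarrow> real \<Rightarrow> real) \<Rightarrow> 'c set \<Rightarrow> 'c list list \<Rightarrow> nat
     \<Rightarrow> 'c state \<Rightarrow> 'c state \<Rightarrow> bool" where
  "quota_step tv C bs S s s' \<longleftrightarrow>
    (let E = eligible C s; Q = quota bs S; X = {e \<in> E. Q \<le> tally bs s e} in
      X \<noteq> {} \<and>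
      s' = \<lparr>seated = seated s \<union> X, elim = elim s,
            loc = (\<lambda>i. case loc s i of None \<Rightarrow> None
                     | Some x \<Rightarrow> if x \<in> X then next_elig (E - X) (bs ! i) x else Some x),
            val = (\<lambda>i. case loc s i of None \<Rightarrow> val s i
                     | Some x \<Rightarrow> if x \<in> X then tv Q (pile_values bs s x) (val s i) else val s i)\<rparr>)"

definition elim_step :: "'c set \<Rightarrow> 'c list list \<Rightarrow> nat \<Rightarrow> 'c state \<Rightarrow> 'c state \<Rightarrow> bool" where
  "elim_step C bs S s s' \<longleftrightarrow>
    (let E = eligible C s in
      (\<forall>e\<in>E. tally bs s e < quota bs S) \<and>
      (\<exists>e\<in>E. (\<forall>e'\<in>E. tally bs s e \<le> tally bs s e') \<and>
         s' = \<lparr>seated = seated s, elim = elim s \<union> {e},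
               loc = (\<lambda>i. if loc s i = Some e then next_elig (E - {e}) (bs ! i) e else loc s i),
               val = val s\<rparr>))"

definition final_step :: "'c set \<Rightarrow> nat \<Rightarrow> 'c state \<Rightarrow> 'c state \<Rightarrow> bool" where
  "final_step C S s s' \<longleftrightarrow>
    card (seated s) < S \<and> card (eligible C s) = S - card (seated s) \<and>
    s' = s\<lparr>seated := seated s \<union> eligible C s\<rparr>"

definition stv_step ::
  "(real \<Rightarrow> real multiset \<Rightarrow> real \<Rightarrow> real) \<Rightarrow> 'c set \<Rightarrow> 'c list list \<Rightarrow> nat
     \<Rightarrow> 'c state \<Rightarrow> 'c state \<Rightarrow> bool" where
  "stv_step tv C bs S s s' \<longleftrightarrow>
     (running C S s \<and> (quota_step tv C bs S s s' \<or> elim_step C bs S s s')) \<or> final_step C S s s'"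

definition stv_run ::
  "(real \<Rightarrow> real multiset \<Rightarrow> real \<Rightarrow> real) \<Rightarrow> 'c set \<Rightarrow> 'c list list \<Rightarrow> nat
     \<Rightarrow> (nat \<Rightarrow> 'c state) \<Rightarrow> nat \<Rightarrow> bool" where
  "stv_run tv C bs S sts n \<longleftrightarrow>
     sts 0 = initial_state bs \<and> (\<forall>k<n. stv_step tv C bs S (sts k) (sts (Suc k))) \<and>
     \<not> (\<exists>s'. stv_step tv C bs S (sts n) s')"

definition L_basic :: "'c list list \<Rightarrow> 'c \<Rightarrow> nat" where
  "L_basic bs c = length (filter (\<lambda>\<beta>. first_opt \<beta> = Some c) bs)"

definition U_comp :: "'c list list \<Rightarrow> 'c \<Rightarrow> 'c \<Rightarrow> nat" where
  "U_comp bs c c' = length (filter (\<lambda>\<beta>. first_opt (sigma {c, c'} \<beta>) = Some c) bs)"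

definition AG :: "'c list list \<Rightarrow> 'c \<Rightarrow> 'c \<Rightarrow> bool" where
  "AG bs g c \<longleftrightarrow> L_basic bs g > U_comp bs c g"

definition precedes :: "'c \<Rightarrow> 'c \<Rightarrow> 'c list \<Rightarrow> bool" where
  "precedes x y \<beta> \<longleftrightarrow> x \<in> set (takeWhile (\<lambda>z. z \<noteq> y) \<beta>)"

definition u_complex :: "'c \<Rightarrow> 'c \<Rightarrow> 'c set \<Rightarrow> ('c \<Rightarrow> real) \<Rightarrow> 'c set \<Rightarrow> 'c list \<Rightarrow> real" where
  "u_complex c b W \<tau> G \<beta> =
    (if \<exists>g\<in>G - W. first_opt (sigma {g, c} \<beta>) = Some g then 0
     else if c \<notin> set \<beta> then 0
     else if first_opt (sigma {b, c} \<beta>) = Some b then 0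
     else if (\<exists>w\<in>W. first_opt \<beta> = Some w) then Max (\<tau> ` {w \<in> W. precedes w c \<beta>})
     else 1)"

definition U_complex :: "'c list list \<Rightarrow> 'c \<Rightarrow> 'c \<Rightarrow> 'c set \<Rightarrow> ('c \<Rightarrow> real) \<Rightarrow> 'c set \<Rightarrow> real" where
  "U_complex bs c b W \<tau> G = (\<Sum>\<beta>\<leftarrow>bs. u_complex c b W \<tau> G \<beta>)"

end

theory Submission imports Defs begin

(* A ballot in the pile of c sits with its highest-ranked eligible candidate, so no
   eligible candidate, b in particular, is ranked above c on it.  While b and c are
   eligible only candidates of W have been seated, so a candidate g in G - W ranked above
   c is not seated; nor was it eliminated, because at that moment its tally was at least
   L_basic(g) (its first preferences had not moved), the tally of c at most U_comp(c, g)
   (each ballot of c ranks c above the eligible g and is worth at most 1), and AG(g, c)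
   makes the first larger.  For the same reason a ballot that has left a first preference
   in W was transferred by some seated w in W ranked above c, so its value is at most
   tau_w; any other ballot is worth at most 1.  Summing over the ballots gives the bound. *)

section \<open>Ballot orders\<close>

lemma precedes_append_Cons_iff:
  assumes "y \<notin> set p"
  shows "precedes z y (p @ y # q) \<longleftrightarrow> z \<in> set p"
proof -
  have "takeWhile (\<lambda>u. u \<noteq> y) p = p"
    using assms by (auto simp: takeWhile_eq_all_conv)
  then show ?thesis by (simp add: precedes_def takeWhile_tail)
qed

lemma find_SomeE:
  assumes "find P xs = Some y"
  obtains ys zs where "xs = ys @ y # zs" "P y" "\<forall>z\<in>set ys. \<not> P z"
  using assms
proof (induction xs arbitrary: thesis)
  case (Cons x xs)
  show ?case
  proof (cases "P x")
    case True
    then show ?thesis using Cons.prems by (intro Cons.prems(1)[of "[]"]) auto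
  next
    case False
    then obtain ys zs where "xs = ys @ y # zs" "P y" "\<forall>z\<in>set ys. \<not> P z"
      using Cons by auto
    then show ?thesis using False by (intro Cons.prems(1)[of "x # ys"]) auto
  qed
qed simp

lemma next_elig_SomeD:
  assumes "distinct \<beta>" and "x \<in> set \<beta>" and "next_elig E \<beta> x = Some y"
  shows "y \<in> E" "y \<in> set \<beta>" "precedes x y \<beta>"
    and "precedes z y \<beta> \<Longrightarrow> z = x \<or> precedes z x \<beta> \<or> z \<notin> E"
    and "precedes z x \<beta> \<Longrightarrow> precedes z y \<beta>"
proof -
  obtain p q where \<beta>: "\<beta> = p @ x # q" and "x \<notin> set p"
    using split_list_first[OF assms(2)] by blast
  then have "dropWhile (\<lambda>u. u \<noteq> x) \<beta> = x # q"
    by (auto simp: dropWhile_append3)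
  then have "find (\<lambda>u. u \<in> E) q = Some y"
    using assms(3) by (simp add: next_elig_def)
  then obtain q1 q2 where q: "q = q1 @ y # q2" and "y \<in> E" and between: "\<forall>z\<in>set q1. z \<notin> E"
    by (rule find_SomeE)
  have \<beta>_split: "\<beta> = (p @ x # q1) @ y # q2" using \<beta> q by simp
  then have "y \<notin> set (p @ x # q1)" using assms(1) by auto
  then have precedes_y: "precedes z y \<beta> \<longleftrightarrow> z \<in> set (p @ x # q1)" for z
    by (subst \<beta>_split) (rule precedes_append_Cons_iff)
  have precedes_x: "precedes z x \<beta> \<longleftrightarrow> z \<in> set p" for z
    using \<beta> \<open>x \<notin> set p\<close> by (simp add: precedes_append_Cons_iff)
  show "y \<in> E" by fact
  show "y \<in> set \<beta>" using \<beta> q by simp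
  show "precedes x y \<beta>" using precedes_y by simp
  show "precedes z y \<beta> \<Longrightarrow> z = x \<or> precedes z x \<beta> \<or> z \<notin> E"
    using precedes_y precedes_x between by auto
  show "precedes z x \<beta> \<Longrightarrow> precedes z y \<beta>"
    using precedes_y precedes_x by auto
qed

lemma first_opt_sigma_pair:
  assumes "c \<in> set \<beta>"
  shows "first_opt (sigma {g, c} \<beta>) = (if precedes g c \<beta> then Some g else Some c)"
proof -
  obtain p q where \<beta>: "\<beta> = p @ c # q" and "c \<notin> set p"
    using split_list_first[OF assms] by blast
  then have "sigma {g, c} \<beta> = filter (\<lambda>x. x = g) p @ c # sigma {g, c} q"
    by (auto simp: sigma_def intro: filter_cong)
  then show ?thesis
    using \<beta> \<open>c \<notin> set p\<close>
    by (cases "filter (\<lambda>x. x = g) p")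
      (auto simp: first_opt_def precedes_append_Cons_iff filter_empty_conv dest: filter_eq_ConsD)
qed

lemma precedes_if_first_opt:
  assumes "first_opt \<beta> = Some w" and "c \<in> set \<beta>" and "w \<noteq> c"
  shows "precedes w c \<beta>"
  using assms by (cases \<beta>) (auto simp: first_opt_def precedes_def)

section \<open>Counting steps\<close>

(* The common shape of a quota step (X the candidates reaching the quota) and of an
   elimination step (X the eliminated candidate). *)
definition transfer_piles :: "'c set \<Rightarrow> 'c list list \<Rightarrow> 'c set \<Rightarrow> 'c state \<Rightarrow> 'c state \<Rightarrow> bool" where
  "transfer_piles C bs X s s' \<longleftrightarrow> X \<subseteq> eligible C s \<and> eligible C s' = eligible C s - X \<and>
     (\<forall>i. loc s' i = (case loc s i of None \<Rightarrow> None
        | Some x \<Rightarrow> if x \<in> X then next_elig (eligible C s - X) (bs ! i) x else Some x))"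

lemma transfer_piles_loc_unchanged:
  assumes "transfer_piles C bs X s s'" and "loc s i = Some x" and "x \<notin> X"
  shows "loc s' i = Some x"
  using assms by (simp add: transfer_piles_def)

lemma quota_stepE:
  assumes "quota_step tv C bs S s s'"
  obtains X where "transfer_piles C bs X s s'" and "\<forall>x\<in>X. quota bs S \<le> tally bs s x"
    and "seated s' = seated s \<union> X" and "elim s' = elim s"
    and "val s' = (\<lambda>i. case loc s i of None \<Rightarrow> val s i
           | Some x \<Rightarrow> if x \<in> X then tv (quota bs S) (pile_values bs s x) (val s i) else val s i)"
proof -
  define X where "X = {e \<in> eligible C s. quota bs S \<le> tally bs s e}"
  have s': "s' = \<lparr>seated = seated s \<union> X, elim = elim s,
      loc = (\<lambda>i. case loc s i of None \<Rightarrow> None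
        | Some x \<Rightarrow> if x \<in> X then next_elig (eligible C s - X) (bs ! i) x else Some x),
      val = (\<lambda>i. case loc s i of None \<Rightarrow> val s i
        | Some x \<Rightarrow> if x \<in> X then tv (quota bs S) (pile_values bs s x) (val s i) else val s i)\<rparr>"
    using assms unfolding quota_step_def Let_def X_def by (rule conjunct2)
  have "transfer_piles C bs X s s'"
    unfolding transfer_piles_def s' by (auto simp: X_def eligible_def)
  with s' show thesis by (intro that) (simp_all add: X_def)
qed

lemma elim_stepE:
  assumes "elim_step C bs S s s'"
  obtains e where "e \<in> eligible C s" and "\<forall>e'\<in>eligible C s. tally bs s e \<le> tally bs s e'"
    and "transfer_piles C bs {e} s s'" and "seated s' = seated s" and "elim s' = elim s \<union> {e}"
    and "val s' = val s"
proof -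
  obtain e where e: "e \<in> eligible C s" "\<forall>e'\<in>eligible C s. tally bs s e \<le> tally bs s e'"
    and s': "s' = \<lparr>seated = seated s, elim = elim s \<union> {e},
      loc = (\<lambda>i. if loc s i = Some e then next_elig (eligible C s - {e}) (bs ! i) e else loc s i),
      val = val s\<rparr>"
    using assms unfolding elim_step_def Let_def by blast
  have "transfer_piles C bs {e} s s'"
    unfolding transfer_piles_def s' using e(1) by (auto simp: eligible_def split: option.split)
  with e s' show thesis by (intro that) simp_all
qed

lemma stv_step_mono:
  assumes "stv_step tv C bs S s s'"
  shows "seated s \<subseteq> seated s'" and "elim s \<subseteq> elim s'"
  using assms by (auto simp: stv_step_def quota_step_def elim_step_def final_step_def Let_def)

lemma final_step_eligible: "final_step C S s s' \<Longrightarrow> eligible C s' = {}"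
  by (auto simp: final_step_def eligible_def)

lemma count_stepE:
  assumes "quota_step tv C bs S s s' \<or> elim_step C bs S s s'"
  obtains X where "transfer_piles C bs X s s'"
    and "\<forall>i x. loc s i = Some x \<and> x \<notin> X \<longrightarrow> val s' i = val s i"
    and "X \<subseteq> seated s' - seated s \<or> (X \<subseteq> elim s' \<and> val s' = val s)"
  using assms
proof
  assume "quota_step tv C bs S s s'"
  then obtain X where "transfer_piles C bs X s s'" and "seated s' = seated s \<union> X"
    and "val s' = (\<lambda>i. case loc s i of None \<Rightarrow> val s i
           | Some x \<Rightarrow> if x \<in> X then tv (quota bs S) (pile_values bs s x) (val s i) else val s i)"
    by (rule quota_stepE)
  then show thesis by (intro that[of X]) (auto simp: transfer_piles_def eligible_def)
next
  assume "elim_step C bs S s s'"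
  then obtain e where "transfer_piles C bs {e} s s'" and "elim s' = elim s \<union> {e}" and "val s' = val s"
    by (rule elim_stepE)
  then show thesis by (intro that[of "{e}"]) auto
qed

section \<open>Invariants of a count\<close>

definition valid_state :: "'c list list \<Rightarrow> 'c state \<Rightarrow> bool" where
  "valid_state bs s \<longleftrightarrow> (\<forall>i<length bs. 0 \<le> val s i \<and> val s i \<le> 1) \<and> seated s \<inter> elim s = {} \<and>
     (\<forall>i<length bs. \<forall>w. first_opt (bs ! i) = Some w \<and> w \<notin> seated s \<and> w \<notin> elim s
        \<longrightarrow> loc s i = Some w \<and> val s i = 1)"

lemma finite_pile: "finite (pile bs s c)"
  by (rule finite_subset[of _ "{..<length bs}"]) (auto simp: pile_def)

lemma transfer_value_bounds:
  assumes "valid_tv tv" and "\<forall>i<length bs. 0 \<le> val s i \<and> val s i \<le> 1"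
    and "i \<in> pile bs s x" and "quota bs S \<le> tally bs s x"
  shows "0 \<le> tv (quota bs S) (pile_values bs s x) (val s i)"
    and "tv (quota bs S) (pile_values bs s x) (val s i) \<le> 1"
proof -
  have "\<forall>u\<in>#pile_values bs s x. 0 \<le> u \<and> u \<le> 1"
    using assms(2) finite_pile[of bs s x] by (auto simp: pile_values_def pile_def)
  moreover have "val s i \<in># pile_values bs s x"
    using assms(3) finite_pile[of bs s x] by (simp add: pile_values_def)
  moreover have "quota bs S \<le> sum_mset (pile_values bs s x)"
    using assms(4) by (simp add: pile_values_def tally_def sum_unfold_sum_mset)
  moreover have "0 < quota bs S" by (simp add: quota_def)
  ultimately show "0 \<le> tv (quota bs S) (pile_values bs s x) (val s i)"
    and "tv (quota bs S) (pile_values bs s x) (val s i) \<le> 1"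
    using assms(1) unfolding valid_tv_def by blast+
qed

lemma valid_state_initial: "valid_state bs (initial_state bs)"
  by (simp add: valid_state_def initial_state_def)

lemma valid_state_step:
  assumes tv: "valid_tv tv" and valid: "valid_state bs s" and step: "stv_step tv C bs S s s'"
  shows "valid_state bs s'"
proof -
  have val_bounds: "\<forall>i<length bs. 0 \<le> val s i \<and> val s i \<le> 1"
    and disjoint: "seated s \<inter> elim s = {}"
    and unmoved: "\<And>i w. i < length bs \<Longrightarrow> first_opt (bs ! i) = Some w \<Longrightarrow> w \<notin> seated s \<Longrightarrow>
        w \<notin> elim s \<Longrightarrow> loc s i = Some w \<and> val s i = 1"
    using valid by (auto simp: valid_state_def)
  consider (quota) "quota_step tv C bs S s s'" | (elim) "elim_step C bs S s s'"
    | (final) "final_step C S s s'"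
    using step by (auto simp: stv_step_def)
  then show ?thesis
  proof cases
    case quota
    then obtain X where piles: "transfer_piles C bs X s s'"
      and quota_X: "\<forall>x\<in>X. quota bs S \<le> tally bs s x"
      and "seated s' = seated s \<union> X" "elim s' = elim s"
      and val': "val s' = (\<lambda>i. case loc s i of None \<Rightarrow> val s i
           | Some x \<Rightarrow> if x \<in> X then tv (quota bs S) (pile_values bs s x) (val s i) else val s i)"
      by (rule quota_stepE)
    have "0 \<le> val s' i \<and> val s' i \<le> 1" if "i < length bs" for i
      using val_bounds that transfer_value_bounds[OF tv val_bounds, of i] quota_X
      by (auto simp: val' pile_def split: option.split)
    moreover have "seated s' \<inter> elim s' = {}"
      using disjoint piles \<open>seated s' = _\<close> \<open>elim s' = _\<close>
      by (auto simp: transfer_piles_def eligible_def)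
    moreover have "loc s' i = Some w \<and> val s' i = 1"
      if "i < length bs" "first_opt (bs ! i) = Some w" "w \<notin> seated s'" "w \<notin> elim s'" for i w
      using that unmoved[of i w] transfer_piles_loc_unchanged[OF piles]
        \<open>seated s' = _\<close> \<open>elim s' = _\<close> by (simp add: val')
    ultimately show ?thesis by (simp add: valid_state_def)
  next
    case elim
    then obtain e where "e \<in> eligible C s" and piles: "transfer_piles C bs {e} s s'"
      and "seated s' = seated s" "elim s' = elim s \<union> {e}" "val s' = val s"
      by (rule elim_stepE)
    then show ?thesis
      using val_bounds disjoint unmoved transfer_piles_loc_unchanged[OF piles]
      by (auto simp: valid_state_def eligible_def)
  next
    case final
    then have "s' = s\<lparr>seated := seated s \<union> eligible C s\<rparr>" by (simp add: final_step_def)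
    then show ?thesis
      using val_bounds disjoint unmoved by (auto simp: valid_state_def eligible_def)
  qed
qed

definition at_top_eligible :: "'c set \<Rightarrow> 'c list list \<Rightarrow> 'c state \<Rightarrow> bool" where
  "at_top_eligible C bs s \<longleftrightarrow> (\<forall>i<length bs. \<forall>x. loc s i = Some x \<longrightarrow>
     x \<in> set (bs ! i) \<and> x \<in> eligible C s \<and> (\<forall>y. precedes y x (bs ! i) \<longrightarrow> y \<notin> eligible C s))"

lemma at_top_eligible_initial:
  assumes "stv_election C bs"
  shows "at_top_eligible C bs (initial_state bs)"
  unfolding at_top_eligible_def
proof (intro allI impI)
  fix i x
  assume "i < length bs" and "loc (initial_state bs) i = Some x"
  then obtain r where "bs ! i = x # r" and "set (bs ! i) \<subseteq> C"
    using assms nth_mem[of i bs]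
    by (cases "bs ! i") (auto simp: initial_state_def first_opt_def stv_election_def)
  then show "x \<in> set (bs ! i) \<and> x \<in> eligible C (initial_state bs) \<and>
      (\<forall>y. precedes y x (bs ! i) \<longrightarrow> y \<notin> eligible C (initial_state bs))"
    by (auto simp: initial_state_def eligible_def precedes_def)
qed

lemma at_top_eligible_transfer:
  assumes distinct: "\<forall>\<beta>\<in>set bs. distinct \<beta>" and top: "at_top_eligible C bs s"
    and piles: "transfer_piles C bs X s s'"
  shows "at_top_eligible C bs s'"
  unfolding at_top_eligible_def
proof (intro allI impI)
  fix i y
  assume i: "i < length bs" and y: "loc s' i = Some y"
  have elig': "eligible C s' = eligible C s - X"
    using piles by (simp add: transfer_piles_def)
  obtain x where x: "loc s i = Some x"
    using y piles by (cases "loc s i") (auto simp: transfer_piles_def)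
  then have "x \<in> set (bs ! i)" and "x \<in> eligible C s"
    and before_x: "\<And>z. precedes z x (bs ! i) \<Longrightarrow> z \<notin> eligible C s"
    using top i by (auto simp: at_top_eligible_def)
  show "y \<in> set (bs ! i) \<and> y \<in> eligible C s' \<and> (\<forall>z. precedes z y (bs ! i) \<longrightarrow> z \<notin> eligible C s')"
  proof (cases "x \<in> X")
    case True
    then have "next_elig (eligible C s - X) (bs ! i) x = Some y"
      using x y piles by (simp add: transfer_piles_def)
    from next_elig_SomeD[OF _ \<open>x \<in> set (bs ! i)\<close> this] show ?thesis
      using distinct i True before_x elig' by auto
  next
    case False
    then show ?thesis
      using x y piles before_x \<open>x \<in> set (bs ! i)\<close> \<open>x \<in> eligible C s\<close> elig'
      by (auto simp: transfer_piles_def)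
  qed
qed

definition transfer_bounded :: "'c list list \<Rightarrow> 'c set \<Rightarrow> ('c \<Rightarrow> real) \<Rightarrow> 'c state \<Rightarrow> bool" where
  "transfer_bounded bs W \<tau> s \<longleftrightarrow> (\<forall>i<length bs. \<forall>x. loc s i = Some x \<longrightarrow>
     (\<forall>w\<in>W. first_opt (bs ! i) = Some w \<longrightarrow> x = w) \<or>
     (\<exists>w\<in>W. precedes w x (bs ! i) \<and> val s i \<le> \<tau> w))"

lemma transfer_bounded_initial: "transfer_bounded bs W \<tau> (initial_state bs)"
  by (simp add: transfer_bounded_def initial_state_def)

lemma transfer_bounded_transfer:
  assumes distinct: "\<forall>\<beta>\<in>set bs. distinct \<beta>" and top: "at_top_eligible C bs s"
    and bounded: "transfer_bounded bs W \<tau> s" and piles: "transfer_piles C bs X s s'"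
    and stay: "\<And>i x. loc s i = Some x \<Longrightarrow> x \<notin> X \<Longrightarrow> val s' i = val s i"
    and move: "\<And>i x. i < length bs \<Longrightarrow> loc s i = Some x \<Longrightarrow> x \<in> X \<Longrightarrow>
       (x \<in> W \<and> val s' i \<le> \<tau> x) \<or> (x \<notin> W \<and> val s' i = val s i)"
  shows "transfer_bounded bs W \<tau> s'"
  unfolding transfer_bounded_def
proof (intro allI impI)
  fix i y
  assume i: "i < length bs" and y: "loc s' i = Some y"
  obtain x where x: "loc s i = Some x"
    using y piles by (cases "loc s i") (auto simp: transfer_piles_def)
  have "x \<in> set (bs ! i)" using top i x by (auto simp: at_top_eligible_def)
  have bound_x: "(\<forall>w\<in>W. first_opt (bs ! i) = Some w \<longrightarrow> x = w) \<or>
      (\<exists>w\<in>W. precedes w x (bs ! i) \<and> val s i \<le> \<tau> w)"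
    using bounded i x by (auto simp: transfer_bounded_def)
  show "(\<forall>w\<in>W. first_opt (bs ! i) = Some w \<longrightarrow> y = w) \<or>
      (\<exists>w\<in>W. precedes w y (bs ! i) \<and> val s' i \<le> \<tau> w)"
  proof (cases "x \<in> X")
    case True
    then have "next_elig (eligible C s - X) (bs ! i) x = Some y"
      using x y piles by (simp add: transfer_piles_def)
    note next_y = next_elig_SomeD[OF _ \<open>x \<in> set (bs ! i)\<close> this]
    show ?thesis
      using move[OF i x True] bound_x next_y(3,5) distinct i by auto
  next
    case False
    then show ?thesis
      using x y piles stay[OF x False] bound_x by (simp add: transfer_piles_def)
  qed
qed

section \<open>Tally bounds\<close>

lemma L_basic_le_tally:
  assumes valid: "valid_state bs s" and "g \<notin> seated s" and "g \<notin> elim s"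
  shows "real (L_basic bs g) \<le> tally bs s g"
proof -
  define A where "A = {i. i < length bs \<and> first_opt (bs ! i) = Some g}"
  have A_pile: "A \<subseteq> pile bs s g" and A_val: "\<forall>i\<in>A. val s i = 1"
    using valid assms(2,3) by (auto simp: A_def pile_def valid_state_def)
  have "real (L_basic bs g) = (\<Sum>i\<in>A. val s i)"
    using A_val by (simp add: L_basic_def length_filter_conv_card A_def)
  also have "\<dots> \<le> tally bs s g"
    unfolding tally_def using A_pile valid finite_pile
    by (intro sum_mono2) (auto simp: valid_state_def pile_def)
  finally show ?thesis .
qed

lemma tally_le_U_comp:
  assumes valid: "valid_state bs s" and top: "at_top_eligible C bs s" and "g \<in> eligible C s"
  shows "tally bs s c \<le> real (U_comp bs c g)"
proof -
  define B where "B = {i. i < length bs \<and> first_opt (sigma {c, g} (bs ! i)) = Some c}"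
  have "pile bs s c \<subseteq> B"
  proof
    fix i
    assume "i \<in> pile bs s c"
    then have "i < length bs" and "c \<in> set (bs ! i)" and "\<not> precedes g c (bs ! i)"
      using top assms(3) by (auto simp: pile_def at_top_eligible_def)
    then show "i \<in> B"
      using first_opt_sigma_pair[of c "bs ! i" g] by (simp add: B_def insert_commute)
  qed
  moreover have "finite B" by (rule finite_subset[of _ "{..<length bs}"]) (auto simp: B_def)
  ultimately have "card (pile bs s c) \<le> card B" by (rule card_mono[rotated])
  have "tally bs s c \<le> (\<Sum>i\<in>pile bs s c. 1)"
    unfolding tally_def using valid by (intro sum_mono) (auto simp: valid_state_def pile_def)
  also have "\<dots> \<le> real (card B)" using \<open>card (pile bs s c) \<le> card B\<close> by simp
  also have "\<dots> = real (U_comp bs c g)"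
    by (simp add: U_comp_def length_filter_conv_card B_def)
  finally show ?thesis .
qed

lemma not_AG_self: "\<not> AG bs c c"
proof -
  have "first_opt \<beta> = Some c \<Longrightarrow> first_opt (sigma {c, c} \<beta>) = Some c" for \<beta>
    by (cases \<beta>) (auto simp: first_opt_def sigma_def)
  then have "L_basic bs c \<le> U_comp bs c c"
    unfolding L_basic_def U_comp_def by (induction bs) auto
  then show ?thesis by (simp add: AG_def)
qed

lemma Max_precedes_ge:
  assumes "finite W" and "w \<in> W" and "precedes w c \<beta>"
  shows "\<tau> w \<le> Max (\<tau> ` {w \<in> W. precedes w c \<beta>})"
  using assms by (intro Max_ge) simp_all

lemma u_complex_nonneg:
  assumes "finite W" and "c \<notin> W" and "\<forall>w\<in>W. first_opt \<beta> = Some w \<longrightarrow> 0 \<le> \<tau> w"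
  shows "0 \<le> u_complex c b W \<tau> G \<beta>"
proof -
  have "0 \<le> Max (\<tau> ` {w \<in> W. precedes w c \<beta>})"
    if first_in_W: "\<exists>w\<in>W. first_opt \<beta> = Some w" and "c \<in> set \<beta>"
  proof -
    obtain w where w: "w \<in> W" "first_opt \<beta> = Some w" using first_in_W by blast
    have "w \<noteq> c" using w(1) assms(2) by blast
    with w \<open>c \<in> set \<beta>\<close> have "precedes w c \<beta>" by (simp add: precedes_if_first_opt)
    then have "\<tau> w \<le> Max (\<tau> ` {w \<in> W. precedes w c \<beta>})"
      by (rule Max_precedes_ge[OF assms(1) w(1)])
    moreover have "0 \<le> \<tau> w" using assms(3) w by blast
    ultimately show ?thesis by linarith
  qed
  then show ?thesis unfolding u_complex_def by simp
qed

lemma le_u_complex: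
  fixes v :: real
  assumes "finite W" and "c \<notin> W" and "c \<notin> G" and "b \<noteq> c" and "c \<in> set \<beta>"
    and "\<not> precedes b c \<beta>" and "\<forall>g\<in>G - W. \<not> precedes g c \<beta>"
    and "v \<le> 1"
    and "(\<forall>w\<in>W. first_opt \<beta> = Some w \<longrightarrow> c = w) \<or> (\<exists>w\<in>W. precedes w c \<beta> \<and> v \<le> \<tau> w)"
  shows "v \<le> u_complex c b W \<tau> G \<beta>"
proof -
  have first_sigma: "first_opt (sigma {g, c} \<beta>) \<noteq> Some g" if "g \<noteq> c" "\<not> precedes g c \<beta>" for g
    using first_opt_sigma_pair[OF assms(5), of g] that by simp
  have "\<not> (\<exists>g\<in>G - W. first_opt (sigma {g, c} \<beta>) = Some g)"
    using first_sigma assms(3,7) by fastforce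
  moreover have "first_opt (sigma {b, c} \<beta>) \<noteq> Some b"
    using first_sigma assms(4,6) by blast
  moreover have "v \<le> Max (\<tau> ` {w \<in> W. precedes w c \<beta>})"
    if first_in_W: "\<exists>w\<in>W. first_opt \<beta> = Some w"
  proof -
    obtain w' where "w' \<in> W" "precedes w' c \<beta>" "v \<le> \<tau> w'"
      using assms(2,9) first_in_W by blast
    moreover from this have "\<tau> w' \<le> Max (\<tau> ` {w \<in> W. precedes w c \<beta>})"
      using assms(1) by (intro Max_precedes_ge)
    ultimately show ?thesis by linarith
  qed
  ultimately show ?thesis using assms(5,8) unfolding u_complex_def by simp
qed

lemma tally_le_sum_list:
  assumes "\<forall>i<length bs. 0 \<le> f (bs ! i)" and "\<forall>i\<in>pile bs s c. val s i \<le> f (bs ! i)"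
  shows "tally bs s c \<le> (\<Sum>\<beta>\<leftarrow>bs. f \<beta>)"
proof -
  have "tally bs s c \<le> (\<Sum>i\<in>pile bs s c. f (bs ! i))"
    unfolding tally_def using assms(2) by (auto intro: sum_mono)
  also have "\<dots> \<le> (\<Sum>i<length bs. f (bs ! i))"
    using assms(1) by (intro sum_mono2) (auto simp: pile_def)
  also have "\<dots> = (\<Sum>\<beta>\<leftarrow>bs. f \<beta>)"
    by (simp add: sum_list_sum_nth atLeast0LessThan)
  finally show ?thesis .
qed

section \<open>Complete counts\<close>

locale stv_count =
  fixes tv :: "real \<Rightarrow> real multiset \<Rightarrow> real \<Rightarrow> real" and C :: "'c set" and bs :: "'c list list"
    and S :: nat and sts :: "nat \<Rightarrow> 'c state" and n :: nat
  assumes election: "stv_election C bs" and valid_tv: "valid_tv tv"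
    and run: "stv_run tv C bs S sts n"
begin

lemma sts_0: "sts 0 = initial_state bs"
  using run by (simp add: stv_run_def)

lemma sts_step: "t < n \<Longrightarrow> stv_step tv C bs S (sts t) (sts (Suc t))"
  using run by (simp add: stv_run_def)

lemma distinct_ballots: "\<forall>\<beta>\<in>set bs. distinct \<beta>"
  using election by (simp add: stv_election_def)

lemma sts_mono:
  assumes "t \<le> t'" and "t' \<le> n"
  shows "seated (sts t) \<subseteq> seated (sts t')" and "elim (sts t) \<subseteq> elim (sts t')"
    and "eligible C (sts t') \<subseteq> eligible C (sts t)"
proof -
  have "seated (sts t) \<subseteq> seated (sts t') \<and> elim (sts t) \<subseteq> elim (sts t')"
    using assms
  proof (induction t' rule: dec_induct)
    case (step m)
    then show ?case using stv_step_mono[OF sts_step[of m]] by auto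
  qed simp
  then show "seated (sts t) \<subseteq> seated (sts t')" and "elim (sts t) \<subseteq> elim (sts t')"
    and "eligible C (sts t') \<subseteq> eligible C (sts t)"
    by (auto simp: eligible_def)
qed

lemma valid_state_sts: "t \<le> n \<Longrightarrow> valid_state bs (sts t)"
  by (induction t) (auto simp: sts_0 valid_state_initial intro: valid_state_step[OF valid_tv _ sts_step])

lemma quota_or_elim_step_before:
  assumes "t < k" and "k \<le> n" and "eligible C (sts k) \<noteq> {}"
  shows "quota_step tv C bs S (sts t) (sts (Suc t)) \<or> elim_step C bs S (sts t) (sts (Suc t))"
proof -
  have "eligible C (sts (Suc t)) \<noteq> {}" using sts_mono(3)[of "Suc t" k] assms by auto
  then have "\<not> final_step C S (sts t) (sts (Suc t))" using final_step_eligible by blast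
  then show ?thesis using sts_step[of t] assms by (auto simp: stv_step_def)
qed

lemma at_top_eligible_sts:
  assumes "k \<le> n" and "eligible C (sts k) \<noteq> {}"
  shows "at_top_eligible C bs (sts k)"
  using assms
proof (induction k)
  case 0
  then show ?case using at_top_eligible_initial[OF election] by (simp add: sts_0)
next
  case (Suc k)
  have "eligible C (sts k) \<noteq> {}" using sts_mono(3)[of k "Suc k"] Suc.prems by auto
  with Suc have top: "at_top_eligible C bs (sts k)" by simp
  have "quota_step tv C bs S (sts k) (sts (Suc k)) \<or> elim_step C bs S (sts k) (sts (Suc k))"
    using quota_or_elim_step_before[of k "Suc k"] Suc.prems by simp
  then obtain X where "transfer_piles C bs X (sts k) (sts (Suc k))" by (rule count_stepE)
  then show ?case by (rule at_top_eligible_transfer[OF distinct_ballots top])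
qed

lemma transfer_bounded_sts:
  assumes "k \<le> n" and "eligible C (sts k) \<noteq> {}"
    and "seated (sts k) \<subseteq> W" and "W \<subseteq> seated (sts n)"
    and "\<forall>j<n. \<forall>w\<in>W. w \<in> seated (sts (Suc j)) - seated (sts j) \<longrightarrow>
           (\<forall>i\<in>pile bs (sts j) w. val (sts (Suc j)) i \<le> \<tau> w)"
  shows "transfer_bounded bs W \<tau> (sts k)"
  using assms
proof (induction k)
  case 0
  then show ?case by (simp add: sts_0 transfer_bounded_initial)
next
  case (Suc k)
  have k: "k \<le> n" "eligible C (sts k) \<noteq> {}"
    using sts_mono(3)[of k "Suc k"] Suc.prems by auto
  with Suc have bounded: "transfer_bounded bs W \<tau> (sts k)"
    using sts_mono(1)[of k "Suc k"] by auto
  have "W \<inter> elim (sts (Suc k)) = {}"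
    using valid_state_sts[of n] sts_mono(2)[of "Suc k" n] Suc.prems(1,4)
    by (auto simp: valid_state_def)
  have "quota_step tv C bs S (sts k) (sts (Suc k)) \<or> elim_step C bs S (sts k) (sts (Suc k))"
    using quota_or_elim_step_before[of k "Suc k"] Suc.prems by simp
  then obtain X where piles: "transfer_piles C bs X (sts k) (sts (Suc k))"
    and stay: "\<forall>i x. loc (sts k) i = Some x \<and> x \<notin> X \<longrightarrow> val (sts (Suc k)) i = val (sts k) i"
    and X: "X \<subseteq> seated (sts (Suc k)) - seated (sts k) \<or>
      (X \<subseteq> elim (sts (Suc k)) \<and> val (sts (Suc k)) = val (sts k))"
    by (rule count_stepE)
  have "(x \<in> W \<and> val (sts (Suc k)) i \<le> \<tau> x) \<or> (x \<notin> W \<and> val (sts (Suc k)) i = val (sts k) i)"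
    if "i < length bs" "loc (sts k) i = Some x" "x \<in> X" for i x
  proof -
    have "i \<in> pile bs (sts k) x" using that(1,2) by (simp add: pile_def)
    moreover have "\<forall>w\<in>W. w \<in> seated (sts (Suc k)) - seated (sts k) \<longrightarrow>
           (\<forall>i\<in>pile bs (sts k) w. val (sts (Suc k)) i \<le> \<tau> w)"
      using Suc.prems(1,5) by simp
    ultimately show ?thesis
      using X Suc.prems(3) \<open>W \<inter> elim (sts (Suc k)) = {}\<close> that(3)
      by (metis Diff_iff IntI empty_iff subsetD)
  qed
  then show ?case
    using transfer_bounded_transfer[OF distinct_ballots at_top_eligible_sts[OF k] bounded piles] stay
    by blast
qed

lemma AG_not_eliminated:
  assumes "AG bs g c" and "k \<le> n" and "c \<in> eligible C (sts k)"
  shows "g \<notin> elim (sts k)"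
proof
  assume "g \<in> elim (sts k)"
  moreover have "g \<notin> elim (sts 0)" by (simp add: sts_0 initial_state_def)
  ultimately obtain j where j: "j < k" "g \<notin> elim (sts j)" "g \<in> elim (sts (Suc j))"
    using ex_least_nat_less[of "\<lambda>t. g \<in> elim (sts t)" k] by auto
  have c_j: "c \<in> eligible C (sts j)" using sts_mono(3)[of j k] j(1) assms(2,3) by auto
  have "\<not> quota_step tv C bs S (sts j) (sts (Suc j))"
    using j(2,3) by (auto simp: quota_step_def Let_def)
  then have "elim_step C bs S (sts j) (sts (Suc j))"
    using quota_or_elim_step_before[of j k] j(1) assms(2,3) by auto
  then obtain e where "e \<in> eligible C (sts j)"
    and minimal: "\<forall>e'\<in>eligible C (sts j). tally bs (sts j) e \<le> tally bs (sts j) e'"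
    and "elim (sts (Suc j)) = elim (sts j) \<union> {e}"
    by (rule elim_stepE)
  with j have g_j: "g \<in> eligible C (sts j)" by auto
  have valid: "valid_state bs (sts j)" using j(1) assms(2) by (simp add: valid_state_sts)
  have "real (L_basic bs g) \<le> tally bs (sts j) g"
    using L_basic_le_tally[OF valid] g_j by (simp add: eligible_def)
  also have "\<dots> \<le> tally bs (sts j) c"
    using minimal c_j g_j \<open>elim (sts (Suc j)) = _\<close> j by auto
  also have "\<dots> \<le> real (U_comp bs c g)"
    using tally_le_U_comp[OF valid at_top_eligible_sts g_j] j(1) assms(2) c_j by auto
  finally show False using assms(1) by (simp add: AG_def)
qed

lemma AG_not_before:
  assumes "AG bs g c" and "g \<in> C" and "g \<notin> seated (sts k)" and "k \<le> n"
    and "at_top_eligible C bs (sts k)" and "i \<in> pile bs (sts k) c"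
  shows "\<not> precedes g c (bs ! i)"
proof
  assume "precedes g c (bs ! i)"
  then have "c \<in> eligible C (sts k)" and "g \<notin> eligible C (sts k)"
    using assms(5,6) by (auto simp: at_top_eligible_def pile_def)
  moreover have "g \<notin> elim (sts k)" using AG_not_eliminated assms(1,4) calculation(1) .
  ultimately show False using assms(2,3) by (simp add: eligible_def)
qed

lemma transfer_bounds_nonneg:
  assumes "W \<subseteq> seated (sts n)"
    and "\<forall>j<n. \<forall>w\<in>W. w \<in> seated (sts (Suc j)) - seated (sts j) \<longrightarrow>
           (\<forall>i\<in>pile bs (sts j) w. val (sts (Suc j)) i \<le> \<tau> w)"
    and "i < length bs" and "w \<in> W" and "first_opt (bs ! i) = Some w"
  shows "0 \<le> \<tau> w"
proof -
  have "w \<notin> seated (sts 0)" by (simp add: sts_0 initial_state_def)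
  then obtain j where j: "j < n" "w \<notin> seated (sts j)" "w \<in> seated (sts (Suc j))"
    using ex_least_nat_less[of "\<lambda>t. w \<in> seated (sts t)" n] assms(1,4) by auto
  have "w \<notin> elim (sts j)"
    using valid_state_sts[of n] sts_mono(2)[of j n] j(1) assms(1,4) by (auto simp: valid_state_def)
  then have "i \<in> pile bs (sts j) w"
    using valid_state_sts[of j] j assms(3,5) by (auto simp: valid_state_def pile_def)
  then have "val (sts (Suc j)) i \<le> \<tau> w" using assms(2,4) j by blast
  moreover have "0 \<le> val (sts (Suc j)) i"
    using valid_state_sts[of "Suc j"] j(1) assms(3) by (simp add: valid_state_def)
  ultimately show ?thesis by linarith
qed

end

theorem lemma4:
  fixes C :: "'c set" and bs :: "'c list list" and S :: nat
    and tv :: "real \<Rightarrow> real multiset \<Rightarrow> real \<Rightarrow> real"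
    and sts :: "nat \<Rightarrow> 'c state" and n k :: nat
    and W G :: "'c set" and b c :: 'c and \<tau> :: "'c \<Rightarrow> real"
  assumes "stv_election C bs"
    and "valid_tv tv"
    and "stv_run tv C bs S sts n"
    and "W \<subseteq> C" and "b \<in> C" and "c \<in> C" and "b \<noteq> c" and "b \<notin> W" and "c \<notin> W"
    and "G \<subseteq> C" and "\<forall>g\<in>G. AG bs g c"
    and "seated (sts n) \<subseteq> W \<union> {b, c}"
    and "W \<subseteq> seated (sts n)"
    and "\<forall>j<n. \<forall>w\<in>W. w \<in> seated (sts (Suc j)) - seated (sts j) \<longrightarrow>
           (\<forall>i\<in>pile bs (sts j) w. val (sts (Suc j)) i \<le> \<tau> w)"
    and "k \<le> n"
    and "b \<in> eligible C (sts k)"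
  shows "tally bs (sts k) c \<le> U_complex bs c b W \<tau> G"
proof -
  interpret stv_count tv C bs S sts n using assms(1-3) by unfold_locales
  have "finite W" using assms(1,4) finite_subset by (auto simp: stv_election_def)
  have "c \<notin> G" using not_AG_self[of bs c] assms(11) by blast
  have top: "at_top_eligible C bs (sts k)" using at_top_eligible_sts assms(15,16) by blast
  have ballot_bound: "val (sts k) i \<le> u_complex c b W \<tau> G (bs ! i)"
    if i: "i \<in> pile bs (sts k) c" for i
  proof (rule le_u_complex[OF \<open>finite W\<close> assms(9) \<open>c \<notin> G\<close> assms(7)])
    show "c \<in> set (bs ! i)" and "\<not> precedes b c (bs ! i)"
      using top i assms(16) by (auto simp: at_top_eligible_def pile_def)
    have "c \<in> eligible C (sts k)" using top i by (auto simp: at_top_eligible_def pile_def)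
    then have seated_k: "seated (sts k) \<subseteq> W"
      using sts_mono(1)[OF assms(15) order_refl] assms(12,16) by (auto simp: eligible_def)
    show "\<forall>g\<in>G - W. \<not> precedes g c (bs ! i)"
      using AG_not_before[OF _ _ _ assms(15) top i] assms(10,11) seated_k by blast
    show "val (sts k) i \<le> 1"
      using valid_state_sts[OF assms(15)] i by (auto simp: valid_state_def pile_def)
    have "transfer_bounded bs W \<tau> (sts k)"
      using transfer_bounded_sts[OF assms(15) _ seated_k assms(13,14)] assms(16) by blast
    then show "(\<forall>w\<in>W. first_opt (bs ! i) = Some w \<longrightarrow> c = w) \<or>
        (\<exists>w\<in>W. precedes w c (bs ! i) \<and> val (sts k) i \<le> \<tau> w)"
      using i by (auto simp: transfer_bounded_def pile_def)
  qed
  \<comment> \<open>\<tau> is not assumed nonnegative, but it is at every w in W that is a first preference.\<close>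
  have "0 \<le> u_complex c b W \<tau> G (bs ! i)" if "i < length bs" for i
    using transfer_bounds_nonneg[OF assms(13,14) that] that
    by (intro u_complex_nonneg[OF \<open>finite W\<close> assms(9)]) blast
  then show ?thesis unfolding U_complex_def using ballot_bound by (intro tally_le_sum_list) auto
qed

end
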